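(* Let $\Omega$ be the set of real symmetric $m\times m$ matrices, $\mathcal{P}$ the set of $m\times m$ orthogonal matrices, $s(A,B,P)=\|AP-PB\|$ for $A,B\in\Omega$, $P\in\mathcal{P}$, with $\|\cdot\|$ an orthogonally invariant matrix norm, and $d(A,B)=\min_{P\in\mathcal{P}}s(A,B,P)$. Let $\Lambda_{A_i}\in\mathbb{R}^m$ be the vector of eigenvalues of $A_i$, ordered from largest to smallest. Then $$d_F(A_{1:n})=\min_{\Lambda_C\in\mathbb{R}^m}\sum_{i=1}^n\|\Lambda_{A_i}-\Lambda_C\|,$$ where $d_F(A_{1:n})=\min_{B\in\Omega}\sum_{i=1}^n d(A_i,B)$ is the Fermat distance function induced by $d$.
   Context: The vector norm on the right-hand side is the one corresponding to the matrix norm: the Euclidean norm when the matrix norm is the Frobenius norm, and the $\infty$-norm when the matrix norm is the operator 2-norm. *)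

theory Defs
  imports "HOL-Analysis.Analysis" "HOL-Computational_Algebra.Polynomial"
begin

text \<open>The two admissible (orthogonally invariant) matrix norms of the paper and
  their corresponding vector norms.\<close>
datatype norm_kind = Frobenius | Operator2

definition symmetric_mat :: "real^'m^'m \<Rightarrow> bool" where
  "symmetric_mat A \<longleftrightarrow> transpose A = A"

definition mat_norm :: "norm_kind \<Rightarrow> real^'m^'m \<Rightarrow> real" where
  "mat_norm k M = (case k of
      Frobenius \<Rightarrow> sqrt (\<Sum>i\<in>UNIV. \<Sum>j\<in>UNIV. (M $ i $ j)^2)
    | Operator2 \<Rightarrow> onorm (\<lambda>x. M *v x))"

definition vec_norm :: "norm_kind \<Rightarrow> real list \<Rightarrow> real" where
  "vec_norm k x = (case k of
      Frobenius \<Rightarrow> sqrt (\<Sum>i<length x. (x ! i)^2)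
    | Operator2 \<Rightarrow> Max {\<bar>x ! i\<bar> | i. i < length x})"

definition s_fun :: "norm_kind \<Rightarrow> real^'m^'m \<Rightarrow> real^'m^'m \<Rightarrow> real^'m^'m \<Rightarrow> real" where
  "s_fun k A B P = mat_norm k (A ** P - P ** B)"

definition d_fun :: "norm_kind \<Rightarrow> real^'m^'m \<Rightarrow> real^'m^'m \<Rightarrow> real" where
  "d_fun k A B = (INF P\<in>{P. orthogonal_matrix P}. s_fun k A B P)"

definition fermat_dist :: "norm_kind \<Rightarrow> nat \<Rightarrow> (nat \<Rightarrow> real^'m^'m) \<Rightarrow> real" where
  "fermat_dist k n A = (INF B\<in>{B. symmetric_mat B}. \<Sum>i<n. d_fun k (A i) B)"

definition char_poly_mat :: "real^'m^'m \<Rightarrow> real poly" where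
  "char_poly_mat A = det (\<chi> i j. (if i = j then [:0, 1:] else 0) - [:A $ i $ j:])"

definition eig_vec :: "real^'m^'m \<Rightarrow> real list" where
  "eig_vec A = rev (sorted_list_of_multiset (proots (char_poly_mat A)))"

definition vdiff :: "real list \<Rightarrow> real list \<Rightarrow> real list" where
  "vdiff x y = map2 (-) x y"

end

theory Submission
  imports Defs
begin

text \<open>For symmetric \<open>A\<close> and \<open>B\<close> with ordered eigenvalue vectors \<open>\<alpha>\<close> and \<open>\<beta>\<close>, every
  orthogonal \<open>P\<close> satisfies \<open>\<parallel>\<alpha> - \<beta>\<parallel> \<le> \<parallel>AP - PB\<parallel>\<close>. For the Frobenius norm this is the
  Hoffman-Wielandt inequality: expanding \<open>\<parallel>AP - PB\<parallel>\<^sup>2\<close> in eigenbases of \<open>A\<close> and \<open>B\<close> leaves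
  a bilinear form in \<open>\<alpha>\<close>, \<open>\<beta>\<close> and the doubly stochastic matrix of squared inner products of
  the two bases, which a rearrangement inequality bounds by \<open>\<Sum> \<alpha>\<^sub>i \<beta>\<^sub>i\<close>. For the operator
  norm it is Weyl's inequality \<open>\<bar>\<alpha>\<^sub>k - \<beta>\<^sub>k\<bar> \<le> \<parallel>AP - PB\<parallel>\<close>, obtained from a vector in the
  intersection of the span of the first \<open>k + 1\<close> eigenvectors of one matrix with the span of
  the last \<open>m - k\<close> eigenvectors of the other, rotated by \<open>P\<close>.
  Conversely, for an arbitrary vector \<open>L\<close> and an orthogonal matrix \<open>Q\<close> of eigenvectors of \<open>A\<close>,
  \<open>AQ - Q diag(L) = Q diag(\<alpha> - L)\<close>, so \<open>d(A, diag(L)) \<le> \<parallel>\<alpha> - L\<parallel>\<close>. Hence every symmetric \<open>B\<close>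
  is matched by the vector of its eigenvalues and every \<open>L\<close> by \<open>diag(L)\<close>, and the two infima agree.\<close>

section \<open>Orthonormal bases indexed by natural numbers\<close>

definition orthonormal_basis_seq :: "(nat \<Rightarrow> 'a::euclidean_space) \<Rightarrow> bool" where
  "orthonormal_basis_seq v \<longleftrightarrow>
     (\<forall>i<DIM('a). \<forall>j<DIM('a). v i \<bullet> v j = (if i = j then 1 else 0))"

lemma orthonormal_basis_seq_independent:
  fixes v :: "nat \<Rightarrow> 'a::euclidean_space"
  assumes v: "orthonormal_basis_seq v" and I: "I \<subseteq> {..<DIM('a)}"
  shows "independent (v ` I)" and "card (v ` I) = card I"
proof -
  have inner: "v i \<bullet> v j = (if i = j then 1 else 0)" if "i \<in> I" "j \<in> I" for i j
    using v subsetD[OF I that(1)] subsetD[OF I that(2)] by (simp add: orthonormal_basis_seq_def)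
  have "inj_on v I"
  proof (rule inj_onI)
    fix i j assume ij: "i \<in> I" "j \<in> I" "v i = v j"
    then have "v i \<bullet> v j = 1" using inner[of j j] by simp
    then show "i = j" using inner[OF ij(1,2)] by (simp split: if_splits)
  qed
  then show "card (v ` I) = card I" by (rule card_image)
  have "pairwise orthogonal (v ` I)"
    using inner unfolding pairwise_def orthogonal_def by (metis (no_types, lifting) imageE)
  moreover have "0 \<notin> v ` I"
  proof
    assume "0 \<in> v ` I"
    then obtain i where "i \<in> I" "v i = 0" by (metis imageE)
    then show False using inner[of i i] by simp
  qed
  ultimately show "independent (v ` I)" by (rule pairwise_orthogonal_independent)
qed

lemma orthonormal_basis_seq_span:
  fixes v :: "nat \<Rightarrow> 'a::euclidean_space"
  assumes "orthonormal_basis_seq v"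
  shows "span (v ` {..<DIM('a)}) = UNIV"
  using card_ge_dim_independent[of "v ` {..<DIM('a)}" UNIV]
    orthonormal_basis_seq_independent[OF assms, of "{..<DIM('a)}"]
  by (simp add: dim_UNIV) blast

lemma orthonormal_basis_seq_expansion:
  fixes v :: "nat \<Rightarrow> 'a::euclidean_space"
  assumes v: "orthonormal_basis_seq v"
  shows "x = (\<Sum>i<DIM('a). (x \<bullet> v i) *\<^sub>R v i)"
proof -
  define y where "y = x - (\<Sum>i<DIM('a). (x \<bullet> v i) *\<^sub>R v i)"
  have "y \<bullet> v j = 0" if j: "j < DIM('a)" for j
  proof -
    have "(\<Sum>i<DIM('a). (x \<bullet> v i) * (v i \<bullet> v j)) = (\<Sum>i<DIM('a). if i = j then x \<bullet> v i else 0)"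
      using v j unfolding orthonormal_basis_seq_def by (intro sum.cong refl) auto
    also have "\<dots> = x \<bullet> v j"
      using j by simp
    finally show ?thesis by (simp add: y_def inner_diff_left inner_sum_left)
  qed
  then have "orthogonal y w" if "w \<in> v ` {..<DIM('a)}" for w
    using that unfolding orthogonal_def by blast
  moreover have "y \<in> span (v ` {..<DIM('a)})"
    using orthonormal_basis_seq_span[OF v] by simp
  ultimately have "orthogonal y y"
    using orthogonal_to_span by blast
  then have "y = 0" by (simp add: orthogonal_self)
  then show ?thesis unfolding y_def by simp
qed

lemma orthonormal_basis_seq_inner:
  fixes v :: "nat \<Rightarrow> 'a::euclidean_space"
  assumes "orthonormal_basis_seq v"
  shows "x \<bullet> y = (\<Sum>i<DIM('a). (x \<bullet> v i) * (y \<bullet> v i))"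
proof -
  have "x \<bullet> y = (\<Sum>i<DIM('a). (x \<bullet> v i) *\<^sub>R v i) \<bullet> y"
    using orthonormal_basis_seq_expansion[OF assms] by metis
  then show ?thesis
    unfolding inner_sum_left by (simp add: inner_commute)
qed

lemma orthonormal_basis_seq_inner_self:
  fixes v :: "nat \<Rightarrow> 'a::euclidean_space"
  assumes "orthonormal_basis_seq v"
  shows "x \<bullet> x = (\<Sum>i<DIM('a). (x \<bullet> v i)\<^sup>2)"
  using orthonormal_basis_seq_inner[OF assms, of x x] by (simp add: power2_eq_square)

lemma orthonormal_basis_seq_span_Int:
  fixes u w :: "nat \<Rightarrow> 'a::euclidean_space"
  assumes u: "orthonormal_basis_seq u" and w: "orthonormal_basis_seq w"
    and I: "I \<subseteq> {..<DIM('a)}" and J: "J \<subseteq> {..<DIM('a)}"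
    and card: "DIM('a) < card I + card J"
  shows "\<exists>z. z \<noteq> 0 \<and> z \<in> span (u ` I) \<and> z \<in> span (w ` J)"
proof (rule ccontr)
  let ?U = "span (u ` I)" and ?W = "span (w ` J)"
  assume "\<not> ?thesis"
  then have "?U \<inter> ?W \<subseteq> span {}"
    by auto
  then have "dim (?U \<inter> ?W) = 0"
    using dim_le_card[of "?U \<inter> ?W" "{}"] by simp
  moreover have "dim {a + b |a b. a \<in> ?U \<and> b \<in> ?W} + dim (?U \<inter> ?W) = dim ?U + dim ?W"
    by (rule dim_sums_Int) auto
  moreover have "dim {a + b |a b. a \<in> ?U \<and> b \<in> ?W} \<le> DIM('a)"
    by (rule dim_subset_UNIV)
  moreover have "dim ?U = card I" "dim ?W = card J"
    using orthonormal_basis_seq_independent[OF u I] orthonormal_basis_seq_independent[OF w J]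
    by (metis dim_span_eq_card_independent)+
  ultimately show False
    using card by linarith
qed

lemma orthonormal_basis_seq_span_orthogonal:
  fixes v :: "nat \<Rightarrow> 'a::euclidean_space"
  assumes v: "orthonormal_basis_seq v" and z: "z \<in> span (v ` I)"
    and I: "I \<subseteq> {..<DIM('a)}" and j: "j < DIM('a)" "j \<notin> I"
  shows "z \<bullet> v j = 0"
proof -
  have "orthogonal (v j) y" if y: "y \<in> v ` I" for y
  proof -
    obtain i where "i \<in> I" "y = v i"
      using y by blast
    then show ?thesis
      using v I j by (auto simp: orthonormal_basis_seq_def orthogonal_def)
  qed
  then have "orthogonal (v j) z"
    using z orthogonal_to_span by blast
  then show ?thesis
    by (simp add: orthogonal_def inner_commute)
qed

section \<open>The spectral theorem for symmetric matrices\<close>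

lemma symmetric_mat_inner:
  fixes A :: "real^'n^'n"
  assumes "symmetric_mat A"
  shows "(A *v x) \<bullet> y = x \<bullet> (A *v y)"
proof -
  have "x \<bullet> (A *v y) = (x v* A) \<bullet> y" by (simp add: dot_lmul_matrix)
  also have "x v* A = transpose A *v x" by (simp add: transpose_matrix_vector)
  also have "transpose A = A" using assms by (simp add: symmetric_mat_def)
  finally show ?thesis by simp
qed

definition ordered_eigenbasis :: "real^'n^'n \<Rightarrow> (nat \<Rightarrow> real^'n) \<Rightarrow> (nat \<Rightarrow> real) \<Rightarrow> bool" where
  "ordered_eigenbasis A v \<alpha> \<longleftrightarrow> orthonormal_basis_seq v \<and>
     (\<forall>i<CARD('n). A *v v i = \<alpha> i *\<^sub>R v i) \<and> (\<forall>i j. i \<le> j \<longrightarrow> j < CARD('n) \<longrightarrow> \<alpha> j \<le> \<alpha> i)"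

lemma ordered_eigenbasisD:
  fixes A :: "real^'n^'n"
  assumes "ordered_eigenbasis A v \<alpha>"
  shows "orthonormal_basis_seq v"
    and "\<And>i. i < CARD('n) \<Longrightarrow> A *v v i = \<alpha> i *\<^sub>R v i"
    and "\<And>i j. i \<le> j \<Longrightarrow> j < CARD('n) \<Longrightarrow> \<alpha> j \<le> \<alpha> i"
  using assms by (simp_all add: ordered_eigenbasis_def)

lemma quadratic_form_eigenbasis:
  fixes A :: "real^'n^'n"
  assumes A: "symmetric_mat A" and v: "ordered_eigenbasis A v \<alpha>"
  shows "x \<bullet> (A *v x) = (\<Sum>i<CARD('n). \<alpha> i * (x \<bullet> v i)\<^sup>2)"
proof -
  have "x \<bullet> (A *v x) = (\<Sum>i<CARD('n). (x \<bullet> v i) * ((A *v x) \<bullet> v i))"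
    using orthonormal_basis_seq_inner[OF ordered_eigenbasisD(1)[OF v], of x "A *v x"] by simp
  also have "\<dots> = (\<Sum>i<CARD('n). \<alpha> i * (x \<bullet> v i)\<^sup>2)"
  proof (rule sum.cong[OF refl])
    fix i assume "i \<in> {..<CARD('n)}"
    then have "(A *v x) \<bullet> v i = \<alpha> i * (x \<bullet> v i)"
      using symmetric_mat_inner[OF A] ordered_eigenbasisD(2)[OF v] by simp
    then show "(x \<bullet> v i) * ((A *v x) \<bullet> v i) = \<alpha> i * (x \<bullet> v i)\<^sup>2"
      by (simp add: power2_eq_square)
  qed
  finally show ?thesis .
qed

lemma quadratic_form_le_if_orthogonal_head:
  fixes A :: "real^'n^'n"
  assumes A: "symmetric_mat A" and v: "ordered_eigenbasis A v \<alpha>" and k: "k < CARD('n)"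
    and x: "\<forall>j<k. x \<bullet> v j = 0"
  shows "x \<bullet> (A *v x) \<le> \<alpha> k * (x \<bullet> x)"
proof -
  have "\<alpha> j * (x \<bullet> v j)\<^sup>2 \<le> \<alpha> k * (x \<bullet> v j)\<^sup>2" if "j < CARD('n)" for j
  proof (cases "k \<le> j")
    case True
    then show ?thesis using ordered_eigenbasisD(3)[OF v True that] by (simp add: mult_right_mono)
  qed (use x in simp)
  then have "(\<Sum>j<CARD('n). \<alpha> j * (x \<bullet> v j)\<^sup>2) \<le> (\<Sum>j<CARD('n). \<alpha> k * (x \<bullet> v j)\<^sup>2)"
    by (intro sum_mono) simp
  then show ?thesis
    using orthonormal_basis_seq_inner_self[OF ordered_eigenbasisD(1)[OF v], of x]
    by (simp add: quadratic_form_eigenbasis[OF A v] sum_distrib_left)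
qed

lemma quadratic_form_ge_if_orthogonal_tail:
  fixes A :: "real^'n^'n"
  assumes A: "symmetric_mat A" and v: "ordered_eigenbasis A v \<alpha>" and k: "k < CARD('n)"
    and x: "\<forall>j<CARD('n). k < j \<longrightarrow> x \<bullet> v j = 0"
  shows "\<alpha> k * (x \<bullet> x) \<le> x \<bullet> (A *v x)"
proof -
  have "\<alpha> k * (x \<bullet> v j)\<^sup>2 \<le> \<alpha> j * (x \<bullet> v j)\<^sup>2" if "j < CARD('n)" for j
  proof (cases "j \<le> k")
    case True
    then show ?thesis using ordered_eigenbasisD(3)[OF v True k] by (simp add: mult_right_mono)
  qed (use x that in simp)
  then have "(\<Sum>j<CARD('n). \<alpha> k * (x \<bullet> v j)\<^sup>2) \<le> (\<Sum>j<CARD('n). \<alpha> j * (x \<bullet> v j)\<^sup>2)"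
    by (intro sum_mono) simp
  then show ?thesis
    using orthonormal_basis_seq_inner_self[OF ordered_eigenbasisD(1)[OF v], of x]
    by (simp add: quadratic_form_eigenbasis[OF A v] sum_distrib_left)
qed

lemma quadratic_nonneg_imp_linear_coeff_zero:
  fixes a b :: real
  assumes nonneg: "\<And>t. 0 \<le> 2 * t * a + t\<^sup>2 * b"
  shows "a = 0"
proof (rule ccontr)
  assume "a \<noteq> 0"
  define c where "c = \<bar>b\<bar> + 1"
  define t where "t = - a / c"
  have c: "c > 0" by (simp add: c_def add_pos_nonneg)
  have "2 * t * a + t\<^sup>2 * b \<le> 2 * t * a + t\<^sup>2 * (c - 1)"
    by (simp add: c_def mult_left_mono)
  also have "\<dots> = - a\<^sup>2 * (c + 1) / c\<^sup>2"
    using c by (simp add: t_def field_simps power2_eq_square)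
  also have "\<dots> < 0"
    using \<open>a \<noteq> 0\<close> c by (simp add: divide_neg_pos)
  finally show False
    using nonneg[of t] by linarith
qed

lemma rayleigh_quotient_max_exists:
  fixes A :: "real^'n^'n"
  assumes S: "subspace S" "S \<noteq> {0}"
  obtains u where "u \<in> S" "u \<bullet> u = 1"
    and "\<And>x. x \<in> S \<Longrightarrow> x \<bullet> (A *v x) \<le> (u \<bullet> (A *v u)) * (x \<bullet> x)"
proof -
  define K where "K = S \<inter> sphere 0 1"
  have "compact K"
    unfolding K_def by (intro closed_Int_compact closed_subspace[OF S(1)] compact_sphere)
  moreover obtain a where "a \<in> S" "a \<noteq> 0"
    using S subspace_0 by blast
  then have "a /\<^sub>R norm a \<in> K"
    using S(1) by (simp add: K_def subspace_scale)
  then have "K \<noteq> {}" by blast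
  moreover have "continuous_on K (\<lambda>x. x \<bullet> (A *v x))"
    by (intro continuous_intros linear_continuous_on matrix_vector_mul_bounded_linear)
  ultimately obtain u where u: "u \<in> K" and max: "\<And>y. y \<in> K \<Longrightarrow> y \<bullet> (A *v y) \<le> u \<bullet> (A *v u)"
    using continuous_attains_sup by metis
  show thesis
  proof
    show "u \<in> S" "u \<bullet> u = 1" using u by (auto simp: K_def dot_square_norm)
    fix x assume x: "x \<in> S"
    show "x \<bullet> (A *v x) \<le> (u \<bullet> (A *v u)) * (x \<bullet> x)"
    proof (cases "x = 0")
      case False
      then have "x /\<^sub>R norm x \<in> K"
        using x S(1) by (simp add: K_def subspace_scale)
      then have "(x /\<^sub>R norm x) \<bullet> (A *v (x /\<^sub>R norm x)) \<le> u \<bullet> (A *v u)"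
        by (rule max)
      moreover have "(x /\<^sub>R norm x) \<bullet> (A *v (x /\<^sub>R norm x)) = (x \<bullet> (A *v x)) / (x \<bullet> x)"
        by (simp add: matrix_vector_mult_scaleR dot_square_norm power2_eq_square field_simps)
      moreover have "0 < x \<bullet> x"
        using False by simp
      ultimately show ?thesis
        by (simp add: divide_le_eq mult.commute)
    qed simp
  qed
qed

lemma rayleigh_quotient_max_eigenvector:
  fixes A :: "real^'n^'n"
  assumes A: "symmetric_mat A" and S: "subspace S" and invariant: "\<And>x. x \<in> S \<Longrightarrow> A *v x \<in> S"
    and u: "u \<in> S" "u \<bullet> u = 1"
    and max: "\<And>x. x \<in> S \<Longrightarrow> x \<bullet> (A *v x) \<le> (u \<bullet> (A *v u)) * (x \<bullet> x)"
  shows "A *v u = (u \<bullet> (A *v u)) *\<^sub>R u"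
proof -
  \<comment> \<open>The residual \<open>r\<close> lies in \<open>S\<close>, and the first variation of the Rayleigh quotient at \<open>u\<close>
    in a direction \<open>w \<in> S\<close> is \<open>w \<bullet> r\<close>, which must vanish.\<close>
  define \<mu> where "\<mu> = u \<bullet> (A *v u)"
  define r where "r = \<mu> *\<^sub>R u - A *v u"
  have r: "r \<in> S"
    unfolding r_def using S u invariant by (simp add: subspace_diff subspace_scale)
  have "w \<bullet> r = 0" if w: "w \<in> S" for w
  proof (rule quadratic_nonneg_imp_linear_coeff_zero)
    fix t :: real
    have "u + t *\<^sub>R w \<in> S"
      using S u w by (simp add: subspace_add subspace_scale)
    from max[OF this] show "0 \<le> 2 * t * (w \<bullet> r) + t\<^sup>2 * (\<mu> * (w \<bullet> w) - w \<bullet> (A *v w))"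
      using symmetric_mat_inner[OF A, of w u] u(2)
      by (simp add: \<mu>_def r_def matrix_vector_right_distrib matrix_vector_mult_scaleR
          inner_add_left inner_add_right inner_diff_right inner_commute power2_eq_square algebra_simps)
  qed
  then have "r \<bullet> r = 0" using r by blast
  then show ?thesis by (simp add: r_def \<mu>_def)
qed

lemma symmetric_mat_eigenvector_orthogonal:
  fixes A :: "real^'n^'n"
  assumes A: "symmetric_mat A" and k: "k < CARD('n)"
    and eigen: "\<forall>i<k. A *v v i = \<alpha> i *\<^sub>R v i"
  obtains u \<mu> where "u \<bullet> u = 1" "\<forall>j<k. u \<bullet> v j = 0" "A *v u = \<mu> *\<^sub>R u"
    and "\<And>x. \<forall>j<k. x \<bullet> v j = 0 \<Longrightarrow> x \<bullet> (A *v x) \<le> \<mu> * (x \<bullet> x)"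
proof -
  define S where "S = {x. \<forall>j<k. x \<bullet> v j = 0}"
  have S_eq: "S = {x. \<forall>y\<in>v ` {..<k}. orthogonal y x}"
    by (auto simp: S_def orthogonal_def inner_commute)
  have S: "subspace S"
    unfolding S_eq by (rule subspace_orthogonal_to_vectors)
  have "dim (span (v ` {..<k})) < CARD('n)"
    using k dim_le_card'[of "v ` {..<k}"] card_image_le[of "{..<k}" v] by simp
  then have "span (v ` {..<k}) \<noteq> UNIV"
    by (metis dim_UNIV DIM_cart DIM_real mult.right_neutral less_irrefl)
  then obtain a where "a \<noteq> 0" "\<forall>x\<in>span (v ` {..<k}). a \<bullet> x = 0"
    using span_not_UNIV_orthogonal by blast
  then have "a \<in> S" "a \<noteq> 0"
    by (auto simp: S_def intro: span_base)
  then have "S \<noteq> {0}" by blast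
  moreover have "A *v x \<in> S" if "x \<in> S" for x
    using that eigen by (simp add: S_def symmetric_mat_inner[OF A])
  ultimately obtain u where "u \<in> S" "u \<bullet> u = 1"
    and "\<And>x. x \<in> S \<Longrightarrow> x \<bullet> (A *v x) \<le> (u \<bullet> (A *v u)) * (x \<bullet> x)"
    "A *v u = (u \<bullet> (A *v u)) *\<^sub>R u"
    using rayleigh_quotient_max_exists[OF S] rayleigh_quotient_max_eigenvector[OF A S] by metis
  then show thesis
    using that unfolding S_def by blast
qed

text \<open>Each eigenvector maximises the Rayleigh quotient on the orthogonal complement of its
  predecessors; the last conjunct records this maximality, which makes the eigenvalues decrease.\<close>

lemma symmetric_mat_partial_eigenbasis:
  fixes A :: "real^'n^'n"
  assumes A: "symmetric_mat A" and k: "k \<le> CARD('n)"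
  shows "\<exists>v \<alpha>. (\<forall>i<k. \<forall>j<k. v i \<bullet> v j = (if i = j then 1 else 0)) \<and>
    (\<forall>i<k. A *v v i = \<alpha> i *\<^sub>R v i) \<and>
    (\<forall>i<k. \<forall>x. (\<forall>j<i. x \<bullet> v j = 0) \<longrightarrow> x \<bullet> (A *v x) \<le> \<alpha> i * (x \<bullet> x))"
  using k
proof (induction k)
  case (Suc k)
  then obtain v \<alpha> where
    orth: "\<forall>i<k. \<forall>j<k. v i \<bullet> v j = (if i = j then 1 else 0)" and
    eigen: "\<forall>i<k. A *v v i = \<alpha> i *\<^sub>R v i" and
    max: "\<forall>i<k. \<forall>x. (\<forall>j<i. x \<bullet> v j = 0) \<longrightarrow> x \<bullet> (A *v x) \<le> \<alpha> i * (x \<bullet> x)"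
    by auto
  obtain u \<mu> where u: "u \<bullet> u = 1" "\<forall>j<k. u \<bullet> v j = 0" "A *v u = \<mu> *\<^sub>R u"
    and u_max: "\<And>x. \<forall>j<k. x \<bullet> v j = 0 \<Longrightarrow> x \<bullet> (A *v x) \<le> \<mu> * (x \<bullet> x)"
    using symmetric_mat_eigenvector_orthogonal[OF A _ eigen] Suc.prems by (metis Suc_le_eq)
  have "\<forall>i<Suc k. \<forall>j<Suc k. (v(k := u)) i \<bullet> (v(k := u)) j = (if i = j then 1 else 0)"
    using orth u by (auto simp: less_Suc_eq inner_commute)
  moreover have "\<forall>i<Suc k. A *v (v(k := u)) i = (\<alpha>(k := \<mu>)) i *\<^sub>R (v(k := u)) i"
    using eigen u by (auto simp: less_Suc_eq)
  moreover have "\<forall>i<Suc k. \<forall>x. (\<forall>j<i. x \<bullet> (v(k := u)) j = 0) \<longrightarrow>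
      x \<bullet> (A *v x) \<le> (\<alpha>(k := \<mu>)) i * (x \<bullet> x)"
    using max u_max by (auto simp: less_Suc_eq)
  ultimately show ?case by blast
qed simp

theorem symmetric_mat_ordered_eigenbasis:
  fixes A :: "real^'n^'n"
  assumes A: "symmetric_mat A"
  obtains v \<alpha> where "ordered_eigenbasis A v \<alpha>"
proof -
  obtain v \<alpha> where
    orth: "\<forall>i<CARD('n). \<forall>j<CARD('n). v i \<bullet> v j = (if i = j then 1 else 0)" and
    eigen: "\<forall>i<CARD('n). A *v v i = \<alpha> i *\<^sub>R v i" and
    max: "\<forall>i<CARD('n). \<forall>x. (\<forall>j<i. x \<bullet> v j = 0) \<longrightarrow> x \<bullet> (A *v x) \<le> \<alpha> i * (x \<bullet> x)"
    using symmetric_mat_partial_eigenbasis[OF A order.refl] by blast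
  have "\<alpha> j \<le> \<alpha> i" if "i \<le> j" "j < CARD('n)" for i j
    using max[rule_format, of i "v j"] orth eigen that by simp
  with orth eigen have "ordered_eigenbasis A v \<alpha>"
    by (simp add: ordered_eigenbasis_def orthonormal_basis_seq_def)
  then show thesis by (rule that)
qed

section \<open>Orthogonal diagonalisation and the ordered eigenvalues\<close>

lemma orthogonal_matrix_inner:
  fixes P :: "real^'n^'n"
  assumes "orthogonal_matrix P"
  shows "(P *v x) \<bullet> (P *v y) = x \<bullet> y"
  using assms orthogonal_transformation_matrix[of "\<lambda>x. P *v x"]
  by (simp add: orthogonal_transformation_def)

lemma orthogonal_matrix_mult_transpose:
  fixes P :: "real^'n^'n"
  assumes "orthogonal_matrix P"
  shows "P *v (transpose P *v x) = x"
  using assms by (metis matrix_vector_mul_assoc matrix_vector_mul_lid orthogonal_matrix_def)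

lemma orthonormal_basis_seq_orthogonal_matrix:
  fixes P :: "real^'n^'n"
  assumes "orthonormal_basis_seq w" "orthogonal_matrix P"
  shows "orthonormal_basis_seq (\<lambda>k. P *v w k)"
  using assms by (simp add: orthonormal_basis_seq_def orthogonal_matrix_inner)

lemma matrix_diff_ldistrib: "(A::'a::ring_1^'n^'m) ** (B - C) = A ** B - A ** C"
  by (vector matrix_matrix_mult_def sum_subtractf[symmetric] algebra_simps)

lemma matrix_diff_rdistrib: "((B::'a::ring_1^'n^'m) - C) ** A = B ** A - C ** A"
  by (vector matrix_matrix_mult_def sum_subtractf[symmetric] algebra_simps)

lemma matrix_mat_commute: "(M::'a::comm_ring_1^'n^'n) ** mat c = mat c ** M"
  unfolding matrix_matrix_mult_def mat_def
  by (simp add: vec_eq_iff if_distrib if_distribR sum.delta sum.delta' mult.commute cong: if_cong)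

lemma to_nat_on_UNIV_bij: "bij_betw (to_nat_on UNIV) (UNIV :: 'n::finite set) {..<CARD('n)}"
  by (rule to_nat_on_finite) simp

lemma to_nat_on_UNIV_less: "to_nat_on UNIV (c :: 'n::finite) < CARD('n)"
  using bij_betwE[OF to_nat_on_UNIV_bij] by blast

lemma to_nat_on_UNIV_eq_iff: "to_nat_on UNIV (a :: 'n::finite) = to_nat_on UNIV b \<longleftrightarrow> a = b"
  using bij_betw_imp_inj_on[OF to_nat_on_UNIV_bij] by (auto dest: inj_onD)

text \<open>The index type \<open>'n\<close> is identified with \<open>{..<CARD('n)}\<close> through the enumeration
  \<open>to_nat_on UNIV\<close>: \<open>basis_mat v\<close> has the vectors \<open>v i\<close> as columns and \<open>diag_mat d\<close> the
  numbers \<open>d i\<close> on the diagonal, both in this order.\<close>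

definition basis_mat :: "(nat \<Rightarrow> real^'n) \<Rightarrow> real^'n^'n" where
  "basis_mat v = (\<chi> r c. v (to_nat_on UNIV c) $ r)"

definition diag_mat :: "(nat \<Rightarrow> real) \<Rightarrow> real^'n^'n" where
  "diag_mat d = (\<chi> i j. if i = j then d (to_nat_on UNIV i) else 0)"

lemma orthogonal_matrix_basis_mat:
  fixes v :: "nat \<Rightarrow> real^'n"
  assumes "orthonormal_basis_seq v"
  shows "orthogonal_matrix (basis_mat v)"
proof -
  have "(transpose (basis_mat v) ** basis_mat v) $ a $ b = mat 1 $ a $ b" for a b
  proof -
    have "(transpose (basis_mat v) ** basis_mat v) $ a $ b
        = v (to_nat_on UNIV a) \<bullet> v (to_nat_on UNIV b)"
      by (simp add: matrix_matrix_mult_def transpose_def basis_mat_def inner_vec_def)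
    then show ?thesis
      using assms to_nat_on_UNIV_less[of a] to_nat_on_UNIV_less[of b]
      by (simp add: orthonormal_basis_seq_def mat_def to_nat_on_UNIV_eq_iff)
  qed
  then show ?thesis
    unfolding orthogonal_matrix by (simp add: vec_eq_iff)
qed

lemma basis_mat_eigen:
  fixes A :: "real^'n^'n"
  assumes "\<forall>i<CARD('n). A *v v i = \<alpha> i *\<^sub>R v i"
  shows "A ** basis_mat v = basis_mat v ** diag_mat \<alpha>"
proof -
  have "(A ** basis_mat v) $ r $ c = (basis_mat v ** diag_mat \<alpha>) $ r $ c" for r c
  proof -
    have "(A ** basis_mat v) $ r $ c = (A *v v (to_nat_on UNIV c)) $ r"
      by (simp add: matrix_matrix_mult_def matrix_vector_mult_def basis_mat_def)
    also have "\<dots> = \<alpha> (to_nat_on UNIV c) * v (to_nat_on UNIV c) $ r"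
      using assms to_nat_on_UNIV_less[of c] by simp
    also have "\<dots> = (basis_mat v ** diag_mat \<alpha>) $ r $ c"
      by (simp add: matrix_matrix_mult_def basis_mat_def diag_mat_def if_distrib if_distribR
          sum.delta' cong: if_cong)
    finally show ?thesis .
  qed
  then show ?thesis by (simp add: vec_eq_iff)
qed

lemma symmetric_mat_diag_mat: "symmetric_mat (diag_mat d)"
  by (simp add: symmetric_mat_def diag_mat_def vec_eq_iff transpose_def)

lemma diag_mat_diff: "diag_mat a - diag_mat b = diag_mat (\<lambda>k. a k - b k)"
  by (simp add: diag_mat_def vec_eq_iff)

definition const_poly_mat :: "real^'n^'m \<Rightarrow> real poly^'n^'m" where
  "const_poly_mat M = (\<chi> i j. [:M $ i $ j:])"

lemma const_poly_mat_mult: "const_poly_mat (M ** N) = const_poly_mat M ** const_poly_mat N"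
  by (simp add: const_poly_mat_def matrix_matrix_mult_def vec_eq_iff sum_to_poly mult_to_poly
      mult.commute)

lemma char_poly_mat_eq_det: "char_poly_mat M = det (mat [:0, 1:] - const_poly_mat M)"
  unfolding char_poly_mat_def by (rule arg_cong[where f=det]) (simp add: vec_eq_iff mat_def const_poly_mat_def)

lemma char_poly_mat_orthogonal_conj:
  fixes Q D :: "real^'n^'n"
  assumes "orthogonal_matrix Q"
  shows "char_poly_mat (Q ** D ** transpose Q) = char_poly_mat D"
proof -
  let ?X = "mat [:0, 1:] :: real poly^'n^'n" and ?Q = "const_poly_mat Q"
    and ?Q' = "const_poly_mat (transpose Q)"
  have inverse: "?Q ** ?Q' = mat 1"
    using assms by (simp add: const_poly_mat_mult[symmetric] orthogonal_matrix_def)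
       (simp add: const_poly_mat_def mat_def vec_eq_iff)
  then have "?Q ** ?X ** ?Q' = ?X"
    by (metis matrix_mat_commute matrix_mul_assoc matrix_mul_rid)
  then have conj: "?X - const_poly_mat (Q ** D ** transpose Q) = ?Q ** (?X - const_poly_mat D) ** ?Q'"
    by (simp add: const_poly_mat_mult matrix_diff_ldistrib matrix_diff_rdistrib matrix_mul_assoc)
  have "det ?Q * det ?Q' = 1"
    using inverse by (metis det_I det_mul)
  then show ?thesis
    unfolding char_poly_mat_eq_det conj det_mul by (simp add: algebra_simps)
qed

lemma char_poly_mat_diag_mat:
  "char_poly_mat (diag_mat d :: real^'n^'n) = (\<Prod>k<CARD('n). [:- d k, 1:])"
proof -
  have "char_poly_mat (diag_mat d :: real^'n^'n) = (\<Prod>c\<in>UNIV. [:- d (to_nat_on UNIV (c::'n)), 1:])"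
    unfolding char_poly_mat_def by (subst det_diagonal) (auto simp: diag_mat_def)
  also have "\<dots> = (\<Prod>k<CARD('n). [:- d k, 1:])"
    by (rule prod.reindex_bij_betw[OF to_nat_on_UNIV_bij])
  finally show ?thesis .
qed

lemma mset_map_upt: "mset (map f [0..<m]) = (\<Sum>k<m. {#f k#})"
  by (induction m) (auto simp: add.commute)

lemma eig_vec_ordered_eigenbasis:
  fixes A :: "real^'n^'n"
  assumes v: "ordered_eigenbasis A v \<alpha>"
  shows "eig_vec A = map \<alpha> [0..<CARD('n)]"
proof -
  define Q where "Q = basis_mat v"
  have Q: "orthogonal_matrix Q"
    unfolding Q_def by (rule orthogonal_matrix_basis_mat[OF ordered_eigenbasisD(1)[OF v]])
  have "A = A ** (Q ** transpose Q)"
    using Q by (simp add: orthogonal_matrix_def)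
  also have "\<dots> = Q ** diag_mat \<alpha> ** transpose Q"
    using basis_mat_eigen[of A v \<alpha>] ordered_eigenbasisD(2)[OF v] by (simp add: Q_def matrix_mul_assoc)
  finally have "char_poly_mat A = (\<Prod>k<CARD('n). [:- \<alpha> k, 1:])"
    by (metis char_poly_mat_orthogonal_conj[OF Q] char_poly_mat_diag_mat)
  then have "proots (char_poly_mat A) = (\<Sum>k<CARD('n). proots [:- \<alpha> k, 1:])"
    by (simp add: proots_prod)
  also have "\<dots> = (\<Sum>k<CARD('n). {#\<alpha> k#})"
    by simp
  also have "\<dots> = mset (map \<alpha> [0..<CARD('n)])"
    by (rule mset_map_upt[symmetric])
  finally have roots: "proots (char_poly_mat A) = mset (map \<alpha> [0..<CARD('n)])" .
  have "sorted (rev (map \<alpha> [0..<CARD('n)]))"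
    unfolding sorted_rev_iff_nth_mono using ordered_eigenbasisD(3)[OF v] by simp
  then have "sort (map \<alpha> [0..<CARD('n)]) = rev (map \<alpha> [0..<CARD('n)])"
    by (intro properties_for_sort) simp_all
  then show ?thesis
    unfolding eig_vec_def roots sorted_list_of_multiset_mset by simp
qed

lemma length_eig_vec:
  fixes A :: "real^'n^'n"
  assumes "symmetric_mat A"
  shows "length (eig_vec A) = CARD('n)"
proof -
  obtain v \<alpha> where "ordered_eigenbasis A v \<alpha>"
    using symmetric_mat_ordered_eigenbasis[OF assms] .
  then show ?thesis by (simp add: eig_vec_ordered_eigenbasis)
qed

section \<open>The Hoffman-Wielandt and Weyl inequalities\<close>

lemma weighted_sum_le_sum_of_largest:
  fixes b c :: "nat \<Rightarrow> real"
  assumes b: "\<And>i j. i \<le> j \<Longrightarrow> j < n \<Longrightarrow> b j \<le> b i" and k: "k < n"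
    and c: "\<And>j. j < n \<Longrightarrow> 0 \<le> c j \<and> c j \<le> 1" and c_sum: "(\<Sum>j<n. c j) = real k"
  shows "(\<Sum>j<n. b j * c j) \<le> (\<Sum>j<k. b j)"
proof -
  define e where "e j = c j - of_bool (j < k)" for j
  have head: "(\<Sum>j<n. of_bool (j < k) * f j) = (\<Sum>j<k. f j)" for f :: "nat \<Rightarrow> real"
  proof -
    have "(\<Sum>j<n. of_bool (j < k) * f j) = sum f ({..<n} \<inter> {j. j < k})"
      by (simp add: sum.inter_restrict)
    also have "{..<n} \<inter> {j. j < k} = {..<k}"
      using k by auto
    finally show ?thesis .
  qed
  have "(\<Sum>j<n. b j * c j) - (\<Sum>j<k. b j) = (\<Sum>j<n. b j * e j)"
    using head[of b] by (simp add: e_def right_diff_distrib sum_subtractf mult.commute)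
  also have "\<dots> \<le> (\<Sum>j<n. b k * e j)"
  proof (rule sum_mono)
    fix j assume "j \<in> {..<n}"
    then show "b j * e j \<le> b k * e j"
      using b[of k j] b[of j k] c[of j] k by (cases "j < k") (auto simp: e_def mult_right_mono_neg mult_right_mono)
  qed
  also have "\<dots> = 0"
    using c_sum head[of "\<lambda>_. 1"] by (simp add: e_def sum_subtractf sum_distrib_left[symmetric])
  finally show ?thesis by simp
qed

lemma sum_mult_nonpos_if_partial_sums_nonpos:
  fixes a d :: "nat \<Rightarrow> real"
  assumes a: "\<And>i j. i \<le> j \<Longrightarrow> j < n \<Longrightarrow> a j \<le> a i"
    and partial: "\<And>k. k < n \<Longrightarrow> (\<Sum>i<k. d i) \<le> 0" and total: "(\<Sum>i<n. d i) = 0"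
  shows "(\<Sum>i<n. a i * d i) \<le> 0"
proof (cases n)
  case (Suc m)
  have "(\<Sum>i<Suc k. a i * d i) \<le> a k * (\<Sum>i<Suc k. d i)" if "k < n" for k
    using that
  proof (induction k)
    case (Suc k)
    have "a k * (\<Sum>i<Suc k. d i) \<le> a (Suc k) * (\<Sum>i<Suc k. d i)"
      using a[of k "Suc k"] partial[of "Suc k"] Suc.prems by (simp add: mult_right_mono_neg)
    then show ?case
      using Suc by (simp add: algebra_simps)
  qed simp
  from this[of m] show ?thesis
    using Suc total by simp
qed simp

lemma doubly_stochastic_rearrangement:
  fixes a b :: "nat \<Rightarrow> real" and S :: "nat \<Rightarrow> nat \<Rightarrow> real"
  assumes a: "\<And>i j. i \<le> j \<Longrightarrow> j < n \<Longrightarrow> a j \<le> a i"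
    and b: "\<And>i j. i \<le> j \<Longrightarrow> j < n \<Longrightarrow> b j \<le> b i"
    and S_nonneg: "\<And>i j. i < n \<Longrightarrow> j < n \<Longrightarrow> 0 \<le> S i j"
    and rows: "\<And>i. i < n \<Longrightarrow> (\<Sum>j<n. S i j) = 1"
    and cols: "\<And>j. j < n \<Longrightarrow> (\<Sum>i<n. S i j) = 1"
  shows "(\<Sum>i<n. \<Sum>j<n. a i * b j * S i j) \<le> (\<Sum>i<n. a i * b i)"
proof -
  define d where "d i = (\<Sum>j<n. b j * S i j) - b i" for i
  have partial_sum: "(\<Sum>i<k. d i) = (\<Sum>j<n. b j * (\<Sum>i<k. S i j)) - (\<Sum>j<k. b j)" for k
    unfolding d_def sum_subtractf sum_distrib_left by (subst sum.swap) simp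
  have partial: "(\<Sum>i<k. d i) \<le> 0" if k: "k < n" for k
  proof -
    have "0 \<le> (\<Sum>i<k. S i j) \<and> (\<Sum>i<k. S i j) \<le> 1" if "j < n" for j
      using that k S_nonneg cols[of j] sum_mono2[of "{..<n}" "{..<k}" "\<lambda>i. S i j"]
      by (auto intro: sum_nonneg)
    moreover have "(\<Sum>j<n. \<Sum>i<k. S i j) = real k"
      using k rows by (subst sum.swap) simp
    ultimately show ?thesis
      unfolding partial_sum using weighted_sum_le_sum_of_largest[OF b k] by simp
  qed
  have total: "(\<Sum>i<n. d i) = 0"
    unfolding partial_sum using cols by simp
  from a partial total have "(\<Sum>i<n. a i * d i) \<le> 0"
    by (rule sum_mult_nonpos_if_partial_sums_nonpos)
  then show ?thesis
    by (simp add: d_def right_diff_distrib sum_subtractf sum_distrib_left mult.assoc)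
qed

lemma frobenius_sq_orthonormal_basis:
  fixes M :: "real^'n^'n"
  assumes w: "orthonormal_basis_seq w"
  shows "(\<Sum>i\<in>UNIV. \<Sum>j\<in>UNIV. (M $ i $ j)\<^sup>2) = (\<Sum>k<CARD('n). (M *v w k) \<bullet> (M *v w k))"
proof -
  have "(\<Sum>i\<in>UNIV. \<Sum>j\<in>UNIV. (M $ i $ j)\<^sup>2) = (\<Sum>i\<in>UNIV. M $ i \<bullet> M $ i)"
    by (simp add: inner_vec_def power2_eq_square)
  also have "\<dots> = (\<Sum>i\<in>UNIV. \<Sum>k<CARD('n). (M $ i \<bullet> w k)\<^sup>2)"
    using orthonormal_basis_seq_inner_self[OF w] by simp
  also have "\<dots> = (\<Sum>k<CARD('n). \<Sum>i\<in>UNIV. (M $ i \<bullet> w k)\<^sup>2)"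
    by (rule sum.swap)
  also have "\<dots> = (\<Sum>k<CARD('n). (M *v w k) \<bullet> (M *v w k))"
    by (simp add: inner_vec_def power2_eq_square matrix_vector_mult_def mult.commute)
  finally show ?thesis .
qed

lemma commutator_mult_eigenvector_inner_self:
  fixes A B P :: "real^'n^'n"
  assumes A: "symmetric_mat A" and u: "ordered_eigenbasis A u \<alpha>"
    and w: "ordered_eigenbasis B w \<beta>" and P: "orthogonal_matrix P" and k: "k < CARD('n)"
  defines "S j \<equiv> (u j \<bullet> (P *v w k))\<^sup>2"
  shows "((A ** P - P ** B) *v w k) \<bullet> ((A ** P - P ** B) *v w k) =
    (\<Sum>j<CARD('n). (\<alpha> j)\<^sup>2 * S j) - 2 * \<beta> k * (\<Sum>j<CARD('n). \<alpha> j * S j) + (\<beta> k)\<^sup>2"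
proof -
  let ?y = "P *v w k"
  have Mw: "(A ** P - P ** B) *v w k = A *v ?y - \<beta> k *\<^sub>R ?y"
    using ordered_eigenbasisD(2)[OF w k]
    by (simp add: matrix_vector_mult_diff_rdistrib matrix_vector_mul_assoc[symmetric]
        matrix_vector_mult_scaleR)
  have "(A *v ?y) \<bullet> u j = \<alpha> j * (u j \<bullet> ?y)" if "j < CARD('n)" for j
    using symmetric_mat_inner[OF A, of ?y "u j"] ordered_eigenbasisD(2)[OF u that]
    by (simp add: inner_commute)
  then have "(A *v ?y) \<bullet> (A *v ?y) = (\<Sum>j<CARD('n). (\<alpha> j)\<^sup>2 * S j)"
    using orthonormal_basis_seq_inner_self[OF ordered_eigenbasisD(1)[OF u], of "A *v ?y"]
    by (simp add: S_def power_mult_distrib)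
  moreover have "?y \<bullet> (A *v ?y) = (\<Sum>j<CARD('n). \<alpha> j * S j)"
    using quadratic_form_eigenbasis[OF A u, of ?y] by (simp add: S_def inner_commute)
  moreover have "?y \<bullet> ?y = 1"
    using orthogonal_matrix_inner[OF P] ordered_eigenbasisD(1)[OF w] k
    by (simp add: orthonormal_basis_seq_def)
  ultimately show ?thesis
    unfolding Mw
    by (simp add: inner_diff_left inner_diff_right power2_eq_square inner_commute algebra_simps)
qed

lemma frobenius_sq_commutator:
  fixes A B P :: "real^'n^'n"
  assumes A: "symmetric_mat A" and u: "ordered_eigenbasis A u \<alpha>"
    and w: "ordered_eigenbasis B w \<beta>" and P: "orthogonal_matrix P"
  defines "S j k \<equiv> (u j \<bullet> (P *v w k))\<^sup>2"
  shows "(\<Sum>r\<in>UNIV. \<Sum>c\<in>UNIV. ((A ** P - P ** B) $ r $ c)\<^sup>2) =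
    (\<Sum>k<CARD('n). \<Sum>j<CARD('n). (\<alpha> j)\<^sup>2 * S j k) - 2 * (\<Sum>k<CARD('n). \<Sum>j<CARD('n). \<alpha> j * \<beta> k * S j k)
      + (\<Sum>k<CARD('n). (\<beta> k)\<^sup>2)"
proof -
  let ?M = "A ** P - P ** B"
  have "(\<Sum>r\<in>UNIV. \<Sum>c\<in>UNIV. (?M $ r $ c)\<^sup>2) = (\<Sum>k<CARD('n). (?M *v w k) \<bullet> (?M *v w k))"
    by (rule frobenius_sq_orthonormal_basis[OF ordered_eigenbasisD(1)[OF w]])
  also have "\<dots> = (\<Sum>k<CARD('n). (\<Sum>j<CARD('n). (\<alpha> j)\<^sup>2 * S j k)
      - 2 * \<beta> k * (\<Sum>j<CARD('n). \<alpha> j * S j k) + (\<beta> k)\<^sup>2)"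
    using commutator_mult_eigenvector_inner_self[OF A u w P] by (simp add: S_def)
  also have "\<dots> = (\<Sum>k<CARD('n). \<Sum>j<CARD('n). (\<alpha> j)\<^sup>2 * S j k)
      - 2 * (\<Sum>k<CARD('n). \<Sum>j<CARD('n). \<alpha> j * \<beta> k * S j k) + (\<Sum>k<CARD('n). (\<beta> k)\<^sup>2)"
    by (simp add: sum.distrib sum_subtractf sum_distrib_left mult.assoc mult.left_commute)
  finally show ?thesis .
qed

theorem hoffman_wielandt:
  fixes A B P :: "real^'n^'n"
  assumes A: "symmetric_mat A" and u: "ordered_eigenbasis A u \<alpha>"
    and w: "ordered_eigenbasis B w \<beta>" and P: "orthogonal_matrix P"
  shows "(\<Sum>i<CARD('n). (\<alpha> i - \<beta> i)\<^sup>2) \<le> (\<Sum>r\<in>UNIV. \<Sum>c\<in>UNIV. ((A ** P - P ** B) $ r $ c)\<^sup>2)"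
proof -
  define S where "S j k = (u j \<bullet> (P *v w k))\<^sup>2" for j k
  have y: "orthonormal_basis_seq (\<lambda>k. P *v w k)"
    by (rule orthonormal_basis_seq_orthogonal_matrix[OF ordered_eigenbasisD(1)[OF w] P])
  have rows: "(\<Sum>k<CARD('n). S j k) = 1" if "j < CARD('n)" for j
    using orthonormal_basis_seq_inner_self[OF y, of "u j"] ordered_eigenbasisD(1)[OF u] that
    by (simp add: S_def orthonormal_basis_seq_def)
  have cols: "(\<Sum>j<CARD('n). S j k) = 1" if "k < CARD('n)" for k
    using orthonormal_basis_seq_inner_self[OF ordered_eigenbasisD(1)[OF u], of "P *v w k"] y that
    by (simp add: S_def orthonormal_basis_seq_def inner_commute)
  have "(\<Sum>k<CARD('n). \<Sum>j<CARD('n). \<alpha> j * \<beta> k * S j k)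
      = (\<Sum>j<CARD('n). \<Sum>k<CARD('n). \<alpha> j * \<beta> k * S j k)"
    by (rule sum.swap)
  also have "\<dots> \<le> (\<Sum>i<CARD('n). \<alpha> i * \<beta> i)"
    by (rule doubly_stochastic_rearrangement[OF ordered_eigenbasisD(3)[OF u] ordered_eigenbasisD(3)[OF w]])
      (use rows cols in \<open>simp_all add: S_def\<close>)
  finally have "(\<Sum>k<CARD('n). \<Sum>j<CARD('n). \<alpha> j * \<beta> k * S j k) \<le> (\<Sum>i<CARD('n). \<alpha> i * \<beta> i)" .
  moreover have "(\<Sum>k<CARD('n). \<Sum>j<CARD('n). (\<alpha> j)\<^sup>2 * S j k) = (\<Sum>j<CARD('n). (\<alpha> j)\<^sup>2)"
    using rows by (subst sum.swap) (simp add: sum_distrib_left[symmetric])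
  moreover have "(\<Sum>i<CARD('n). (\<alpha> i - \<beta> i)\<^sup>2)
      = (\<Sum>j<CARD('n). (\<alpha> j)\<^sup>2) - 2 * (\<Sum>i<CARD('n). \<alpha> i * \<beta> i) + (\<Sum>k<CARD('n). (\<beta> k)\<^sup>2)"
    by (simp add: power2_diff sum.distrib sum_subtractf sum_distrib_left mult.assoc)
  ultimately show ?thesis
    unfolding frobenius_sq_commutator[OF A u w P] S_def[symmetric] by linarith
qed

lemma inner_commutator:
  fixes A B P :: "real^'n^'n"
  assumes P: "orthogonal_matrix P"
  shows "(P *v x) \<bullet> ((A ** P - P ** B) *v x) = (P *v x) \<bullet> (A *v (P *v x)) - x \<bullet> (B *v x)"
  using orthogonal_matrix_inner[OF P, of x "B *v x"]
  by (simp add: matrix_vector_mult_diff_rdistrib matrix_vector_mul_assoc[symmetric] inner_diff_right)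

lemma inner_commutator_le_onorm:
  fixes A B P :: "real^'n^'n"
  assumes P: "orthogonal_matrix P"
  shows "\<bar>(P *v x) \<bullet> ((A ** P - P ** B) *v x)\<bar> \<le> onorm (\<lambda>x. (A ** P - P ** B) *v x) * (x \<bullet> x)"
proof -
  let ?M = "A ** P - P ** B"
  have "norm (P *v x) = norm x"
    using orthogonal_matrix_inner[OF P, of x x] by (simp add: norm_eq_sqrt_inner)
  then have "\<bar>(P *v x) \<bullet> (?M *v x)\<bar> \<le> norm x * norm (?M *v x)"
    using Cauchy_Schwarz_ineq2[of "P *v x" "?M *v x"] by simp
  also have "\<dots> \<le> norm x * (onorm (\<lambda>x. ?M *v x) * norm x)"
    using onorm[OF matrix_vector_mul_bounded_linear[of ?M], of x] by (simp add: mult_left_mono)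
  finally show ?thesis
    by (simp add: dot_square_norm power2_eq_square algebra_simps)
qed

lemma weyl_witness:
  fixes A B P :: "real^'n^'n"
  assumes A: "symmetric_mat A" and u: "ordered_eigenbasis A u \<alpha>"
    and B: "symmetric_mat B" and w: "ordered_eigenbasis B w \<beta>"
    and P: "orthogonal_matrix P" and k: "k < CARD('n)"
  obtains x where "x \<noteq> 0" "\<alpha> k * (x \<bullet> x) \<le> (P *v x) \<bullet> (A *v (P *v x))"
    and "x \<bullet> (B *v x) \<le> \<beta> k * (x \<bullet> x)"
proof -
  let ?y = "\<lambda>l. P *v w l"
  have y: "orthonormal_basis_seq ?y"
    by (rule orthonormal_basis_seq_orthogonal_matrix[OF ordered_eigenbasisD(1)[OF w] P])
  have sub: "{..<Suc k} \<subseteq> {..<CARD('n)}" "{k..<CARD('n)} \<subseteq> {..<CARD('n)}"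
    using k by auto
  then have "\<exists>z. z \<noteq> 0 \<and> z \<in> span (u ` {..<Suc k}) \<and> z \<in> span (?y ` {k..<CARD('n)})"
    by (intro orthonormal_basis_seq_span_Int[OF ordered_eigenbasisD(1)[OF u] y]) (use k in simp_all)
  then obtain z where z: "z \<noteq> 0" "z \<in> span (u ` {..<Suc k})" "z \<in> span (?y ` {k..<CARD('n)})"
    by blast
  define x where "x = transpose P *v z"
  have Px: "P *v x = z"
    unfolding x_def by (rule orthogonal_matrix_mult_transpose[OF P])
  have "z \<bullet> u j = 0" if "j < CARD('n)" "k < j" for j
    using orthonormal_basis_seq_span_orthogonal[OF ordered_eigenbasisD(1)[OF u] z(2)] that by simp
  then have "\<alpha> k * (z \<bullet> z) \<le> z \<bullet> (A *v z)"
    by (intro quadratic_form_ge_if_orthogonal_tail[OF A u k]) blast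
  moreover have "x \<bullet> w l = 0" if "l < k" for l
    using orthonormal_basis_seq_span_orthogonal[OF y z(3), of l] sub(2) orthogonal_matrix_inner[OF P, of x "w l"]
      that k Px by simp
  then have "x \<bullet> (B *v x) \<le> \<beta> k * (x \<bullet> x)"
    by (intro quadratic_form_le_if_orthogonal_head[OF B w k]) blast
  moreover have "x \<bullet> x = z \<bullet> z" "x \<noteq> 0"
    using orthogonal_matrix_inner[OF P, of x x] Px z(1) by auto
  ultimately show thesis
    using that Px by simp
qed

theorem weyl_inequality:
  fixes A B P :: "real^'n^'n"
  assumes A: "symmetric_mat A" and u: "ordered_eigenbasis A u \<alpha>"
    and B: "symmetric_mat B" and w: "ordered_eigenbasis B w \<beta>"
    and P: "orthogonal_matrix P" and k: "k < CARD('n)"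
  shows "\<bar>\<alpha> k - \<beta> k\<bar> \<le> onorm (\<lambda>x. (A ** P - P ** B) *v x)"
proof -
  let ?N = "onorm (\<lambda>x. (A ** P - P ** B) *v x)"
  have "\<alpha> k - \<beta> k \<le> ?N"
  proof -
    obtain x where "x \<noteq> 0" "\<alpha> k * (x \<bullet> x) \<le> (P *v x) \<bullet> (A *v (P *v x))"
      "x \<bullet> (B *v x) \<le> \<beta> k * (x \<bullet> x)"
      using weyl_witness[OF A u B w P k] .
    then have "(\<alpha> k - \<beta> k) * (x \<bullet> x) \<le> ?N * (x \<bullet> x)"
      using inner_commutator_le_onorm[OF P, of x A B] inner_commutator[OF P, of x A B]
      by (simp add: left_diff_distrib abs_le_iff)
    then show ?thesis
      using \<open>x \<noteq> 0\<close> by simp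
  qed
  moreover have "\<beta> k - \<alpha> k \<le> ?N"
  proof -
    have P': "orthogonal_matrix (transpose P)"
      using P by simp
    obtain x' where "x' \<noteq> 0" "\<beta> k * (x' \<bullet> x') \<le> (transpose P *v x') \<bullet> (B *v (transpose P *v x'))"
      "x' \<bullet> (A *v x') \<le> \<alpha> k * (x' \<bullet> x')"
      using weyl_witness[OF B w A u P' k] .
    moreover define x where "x = transpose P *v x'"
    moreover have "P *v x = x'" "x \<bullet> x = x' \<bullet> x'"
      using orthogonal_matrix_mult_transpose[OF P] orthogonal_matrix_inner[OF P', of x' x']
      by (simp_all add: x_def)
    ultimately have "(\<beta> k - \<alpha> k) * (x \<bullet> x) \<le> ?N * (x \<bullet> x)" "x \<noteq> 0"
      using inner_commutator_le_onorm[OF P, of x A B] inner_commutator[OF P, of x A B]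
      by (auto simp: left_diff_distrib abs_le_iff)
    then show ?thesis
      by simp
  qed
  ultimately show ?thesis
    by linarith
qed

section \<open>The distance and the Fermat distance\<close>

lemma diag_mat_mult_vec: "(diag_mat d *v x) $ i = d (to_nat_on UNIV i) * x $ i"
  by (simp add: matrix_vector_mult_def diag_mat_def if_distrib if_distribR sum.delta' cong: if_cong)

lemma frobenius_sq_basis_mat_diag_mat:
  fixes u :: "nat \<Rightarrow> real^'n"
  assumes u: "orthonormal_basis_seq u"
  shows "(\<Sum>r\<in>UNIV. \<Sum>c\<in>UNIV. ((basis_mat u ** diag_mat d :: real^'n^'n) $ r $ c)\<^sup>2)
    = (\<Sum>k<CARD('n). (d k)\<^sup>2)"
proof -
  have "((basis_mat u ** diag_mat d) $ r $ c)\<^sup>2 = (u (to_nat_on UNIV c) $ r)\<^sup>2 * (d (to_nat_on UNIV c))\<^sup>2"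
    for r c :: 'n
    by (simp add: matrix_matrix_mult_def basis_mat_def diag_mat_def if_distrib if_distribR sum.delta'
        power_mult_distrib cong: if_cong)
  then have "(\<Sum>r\<in>UNIV. \<Sum>c\<in>UNIV. ((basis_mat u ** diag_mat d :: real^'n^'n) $ r $ c)\<^sup>2)
      = (\<Sum>c\<in>UNIV. (u (to_nat_on UNIV c) \<bullet> u (to_nat_on UNIV c)) * (d (to_nat_on UNIV (c::'n)))\<^sup>2)"
    by (subst sum.swap) (simp add: inner_vec_def power2_eq_square sum_distrib_right)
  also have "\<dots> = (\<Sum>c\<in>UNIV. (d (to_nat_on UNIV (c::'n)))\<^sup>2)"
  proof -
    have "u (to_nat_on UNIV c) \<bullet> u (to_nat_on UNIV c) = 1" for c :: 'n
      using u to_nat_on_UNIV_less[of c] by (simp add: orthonormal_basis_seq_def)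
    then show ?thesis by simp
  qed
  also have "\<dots> = (\<Sum>k<CARD('n). (d k)\<^sup>2)"
    by (rule sum.reindex_bij_betw[OF to_nat_on_UNIV_bij])
  finally show ?thesis .
qed

lemma onorm_basis_mat_diag_mat_le:
  fixes u :: "nat \<Rightarrow> real^'n"
  assumes u: "orthonormal_basis_seq u" and bound: "\<And>k. k < CARD('n) \<Longrightarrow> \<bar>d k\<bar> \<le> D"
  shows "onorm (\<lambda>x. (basis_mat u ** diag_mat d :: real^'n^'n) *v x) \<le> D"
proof (rule onorm_le)
  fix x :: "real^'n"
  have D: "0 \<le> D"
    using bound[of 0] by simp
  have "(norm (diag_mat d *v x))\<^sup>2 = (\<Sum>i\<in>UNIV. (d (to_nat_on UNIV i))\<^sup>2 * (x $ i)\<^sup>2)"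
    unfolding power2_norm_eq_inner
    by (simp add: inner_vec_def diag_mat_mult_vec power2_eq_square algebra_simps)
  also have "\<dots> \<le> (\<Sum>i\<in>UNIV. D\<^sup>2 * (x $ i)\<^sup>2)"
  proof (intro sum_mono mult_right_mono)
    fix i :: 'n
    show "(d (to_nat_on UNIV i))\<^sup>2 \<le> D\<^sup>2"
      using bound[OF to_nat_on_UNIV_less[of i]] by (metis abs_ge_zero power2_abs power_mono)
  qed simp
  also have "\<dots> = D\<^sup>2 * (x \<bullet> x)"
    by (simp add: inner_vec_def power2_eq_square sum_distrib_left)
  also have "\<dots> = (D * norm x)\<^sup>2"
    by (simp add: power_mult_distrib dot_square_norm)
  finally have "norm (diag_mat d *v x) \<le> D * norm x"
    by (rule power2_le_imp_le) (simp add: D)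
  moreover have "norm ((basis_mat u ** diag_mat d) *v x) = norm (diag_mat d *v x)"
    using orthogonal_matrix_inner[OF orthogonal_matrix_basis_mat[OF u], of "diag_mat d *v x"]
    by (simp add: norm_eq_sqrt_inner matrix_vector_mul_assoc[symmetric])
  ultimately show "norm ((basis_mat u ** diag_mat d) *v x) \<le> D * norm x"
    by simp
qed

lemma vec_norm_Frobenius_vdiff:
  assumes "length L = m"
  shows "vec_norm Frobenius (vdiff (map \<alpha> [0..<m]) L) = sqrt (\<Sum>i<m. (\<alpha> i - L ! i)\<^sup>2)"
  using assms by (simp add: vec_norm_def vdiff_def)

lemma vec_norm_Operator2_vdiff:
  assumes "length L = m"
  shows "vec_norm Operator2 (vdiff (map \<alpha> [0..<m]) L) = Max {\<bar>\<alpha> i - L ! i\<bar> | i. i < m}"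
proof -
  let ?x = "vdiff (map \<alpha> [0..<m]) L"
  have len: "length ?x = m" and nth: "\<And>i. i < m \<Longrightarrow> ?x ! i = \<alpha> i - L ! i"
    using assms by (simp_all add: vdiff_def)
  have "{\<bar>?x ! i\<bar> | i. i < length ?x} = {\<bar>\<alpha> i - L ! i\<bar> | i. i < m}"
    unfolding len using nth by force
  then show ?thesis
    by (simp add: vec_norm_def)
qed

lemma vec_norm_nonneg:
  assumes "x \<noteq> []"
  shows "0 \<le> vec_norm k x"
proof (cases k)
  case Operator2
  have "\<bar>x ! 0\<bar> \<le> Max {\<bar>x ! i\<bar> | i. i < length x}"
    using assms by (intro Max_ge) auto
  then show ?thesis
    using Operator2 abs_ge_zero[of "x ! 0"] by (simp add: vec_norm_def)
qed (simp add: vec_norm_def sum_nonneg)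

lemma mat_norm_nonneg: "0 \<le> mat_norm k M"
  by (cases k) (auto simp: mat_norm_def intro!: onorm_pos_le matrix_vector_mul_bounded_linear sum_nonneg)

lemma d_fun_ge_eig_vec_dist:
  fixes A B :: "real^'n^'n"
  assumes A: "symmetric_mat A" and B: "symmetric_mat B"
  shows "vec_norm k (vdiff (eig_vec A) (eig_vec B)) \<le> d_fun k A B"
proof -
  obtain u \<alpha> where u: "ordered_eigenbasis A u \<alpha>"
    using symmetric_mat_ordered_eigenbasis[OF A] .
  obtain w \<beta> where w: "ordered_eigenbasis B w \<beta>"
    using symmetric_mat_ordered_eigenbasis[OF B] .
  have len: "length (map \<beta> [0..<CARD('n)]) = CARD('n)"
    by simp
  show ?thesis
    unfolding d_fun_def s_fun_def eig_vec_ordered_eigenbasis[OF u] eig_vec_ordered_eigenbasis[OF w]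
  proof (rule cINF_greatest)
    show "{P :: real^'n^'n. orthogonal_matrix P} \<noteq> {}"
      using orthogonal_matrix_id by blast
    fix P :: "real^'n^'n" assume "P \<in> {P. orthogonal_matrix P}"
    then have P: "orthogonal_matrix P" by simp
    show "vec_norm k (vdiff (map \<alpha> [0..<CARD('n)]) (map \<beta> [0..<CARD('n)])) \<le> mat_norm k (A ** P - P ** B)"
    proof (cases k)
      case Frobenius
      then show ?thesis
        using hoffman_wielandt[OF A u w P]
        by (simp add: vec_norm_Frobenius_vdiff[OF len] mat_norm_def)
    next
      case Operator2
      have "Max {\<bar>\<alpha> i - map \<beta> [0..<CARD('n)] ! i\<bar> | i. i < CARD('n)}
          \<le> onorm (\<lambda>x. (A ** P - P ** B) *v x)"
        using weyl_inequality[OF A u B w P] by (intro Max.boundedI) (auto intro: exI[of _ 0])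
      then show ?thesis
        by (simp add: Operator2 vec_norm_Operator2_vdiff[OF len] mat_norm_def)
    qed
  qed
qed

lemma d_fun_diag_mat_le:
  fixes A :: "real^'n^'n"
  assumes A: "symmetric_mat A" and L: "length L = CARD('n)"
  shows "d_fun k A (diag_mat (\<lambda>j. L ! j)) \<le> vec_norm k (vdiff (eig_vec A) L)"
proof -
  obtain u \<alpha> where u: "ordered_eigenbasis A u \<alpha>"
    using symmetric_mat_ordered_eigenbasis[OF A] .
  define P where "P = basis_mat u"
  have P: "orthogonal_matrix P"
    unfolding P_def by (rule orthogonal_matrix_basis_mat[OF ordered_eigenbasisD(1)[OF u]])
  have "A ** P - P ** diag_mat (\<lambda>j. L ! j) = P ** (diag_mat \<alpha> - diag_mat (\<lambda>j. L ! j))"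
    using basis_mat_eigen[of A u \<alpha>] ordered_eigenbasisD(2)[OF u] by (simp add: P_def matrix_diff_ldistrib)
  then have commutator: "A ** P - P ** diag_mat (\<lambda>j. L ! j) = basis_mat u ** diag_mat (\<lambda>j. \<alpha> j - L ! j)"
    by (simp add: P_def diag_mat_diff)
  have "d_fun k A (diag_mat (\<lambda>j. L ! j)) \<le> s_fun k A (diag_mat (\<lambda>j. L ! j)) P"
    unfolding d_fun_def
    by (rule cINF_lower) (use P in \<open>auto intro!: bdd_belowI[of _ 0] simp: s_fun_def mat_norm_nonneg\<close>)
  also have "\<dots> \<le> vec_norm k (vdiff (eig_vec A) L)"
  proof (cases k)
    case Frobenius
    then show ?thesis
      using frobenius_sq_basis_mat_diag_mat[OF ordered_eigenbasisD(1)[OF u]]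
      by (simp add: s_fun_def commutator mat_norm_def eig_vec_ordered_eigenbasis[OF u]
          vec_norm_Frobenius_vdiff[OF L])
  next
    case Operator2
    have "onorm (\<lambda>x. (basis_mat u ** diag_mat (\<lambda>j. \<alpha> j - L ! j)) *v x)
        \<le> Max {\<bar>\<alpha> i - L ! i\<bar> | i. i < CARD('n)}"
      by (rule onorm_basis_mat_diag_mat_le[OF ordered_eigenbasisD(1)[OF u]]) (auto intro: Max_ge)
    then show ?thesis
      by (simp add: Operator2 s_fun_def commutator mat_norm_def eig_vec_ordered_eigenbasis[OF u]
          vec_norm_Operator2_vdiff[OF L])
  qed
  finally show ?thesis .
qed

lemma fermat_dist_le_sum_vec_norm:
  fixes A :: "nat \<Rightarrow> real^'m^'m"
  assumes A: "\<forall>i<n. symmetric_mat (A i)" and L: "length L = CARD('m)"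
  shows "fermat_dist k n A \<le> (\<Sum>i<n. vec_norm k (vdiff (eig_vec (A i)) L))"
proof -
  have "fermat_dist k n A \<le> (\<Sum>i<n. d_fun k (A i) (diag_mat (\<lambda>j. L ! j)))"
    unfolding fermat_dist_def d_fun_def s_fun_def
    by (rule cINF_lower)
      (auto intro!: bdd_belowI[of _ 0] sum_nonneg cINF_greatest mat_norm_nonneg symmetric_mat_diag_mat
        intro: orthogonal_matrix_id)
  also have "\<dots> \<le> (\<Sum>i<n. vec_norm k (vdiff (eig_vec (A i)) L))"
    using A d_fun_diag_mat_le[OF _ L] by (intro sum_mono) simp
  finally show ?thesis .
qed

lemma INF_sum_vec_norm_le_fermat_dist:
  fixes A :: "nat \<Rightarrow> real^'m^'m"
  assumes A: "\<forall>i<n. symmetric_mat (A i)"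
  shows "(INF L\<in>{L :: real list. length L = CARD('m)}. \<Sum>i<n. vec_norm k (vdiff (eig_vec (A i)) L))
    \<le> fermat_dist k n A"
  unfolding fermat_dist_def
proof (rule cINF_greatest)
  show "{B :: real^'m^'m. symmetric_mat B} \<noteq> {}"
    using symmetric_mat_diag_mat by blast
  fix B :: "real^'m^'m" assume "B \<in> {B. symmetric_mat B}"
  then have B: "symmetric_mat B" by simp
  have nonneg: "0 \<le> vec_norm k (vdiff (eig_vec (A i)) L)" if "i < n" "length L = CARD('m)" for i L
  proof (rule vec_norm_nonneg)
    have "length (eig_vec (A i)) = CARD('m)"
      using A that(1) by (simp add: length_eig_vec)
    then show "vdiff (eig_vec (A i)) L \<noteq> []"
      using that(2) by (auto simp: vdiff_def)
  qed
  have "(INF L\<in>{L. length L = CARD('m)}. \<Sum>i<n. vec_norm k (vdiff (eig_vec (A i)) L))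
      \<le> (\<Sum>i<n. vec_norm k (vdiff (eig_vec (A i)) (eig_vec B)))"
    using nonneg length_eig_vec[OF B] by (intro cINF_lower bdd_belowI[of _ 0]) (auto intro!: sum_nonneg)
  also have "\<dots> \<le> (\<Sum>i<n. d_fun k (A i) B)"
    using A d_fun_ge_eig_vec_dist[OF _ B] by (intro sum_mono) simp
  finally show "(INF L\<in>{L. length L = CARD('m)}. \<Sum>i<n. vec_norm k (vdiff (eig_vec (A i)) L))
      \<le> (\<Sum>i<n. d_fun k (A i) B)" .
qed

theorem theorem6:
  fixes k :: norm_kind and n :: nat and A :: "nat \<Rightarrow> real^'m^'m"
  assumes "\<forall>i<n. symmetric_mat (A i)"
  shows "fermat_dist k n A =
    (INF L\<in>{L :: real list. length L = CARD('m)}. \<Sum>i<n. vec_norm k (vdiff (eig_vec (A i)) L))"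
proof (rule antisym)
  show "fermat_dist k n A \<le>
      (INF L\<in>{L :: real list. length L = CARD('m)}. \<Sum>i<n. vec_norm k (vdiff (eig_vec (A i)) L))"
    using fermat_dist_le_sum_vec_norm[OF assms]
    by (intro cINF_greatest) (auto intro: exI[of _ "replicate CARD('m) 0"])
  show "(INF L\<in>{L :: real list. length L = CARD('m)}. \<Sum>i<n. vec_norm k (vdiff (eig_vec (A i)) L))
      \<le> fermat_dist k n A"
    by (rule INF_sum_vec_norm_le_fermat_dist[OF assms])
qed

end
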